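(* Let $d\ge 3$ and $\delta,\lambda>0$. Let $S$ be the inverse Gaussian subordinator with Laplace exponent $\phi(s)=\delta\left(\sqrt{2s+\lambda^2}-\lambda\right)$ and potential density $u$, and let $B$ be a $d$-dimensional Brownian motion independent of $S$ with transition density $p(t,x,y)=(4\pi t)^{-d/2}\exp\left(-\frac{|x-y|^2}{4t}\right)$. Let $G(x)=\int_0^\infty p(t,0,x)\,u(t)\,dt$ be the Green function of the normal inverse Gaussian process $Y(t)=B(S(t))$. Then \begin{enumerate} \item $G(x)\sim \dfrac{1}{2^{3/2}\pi^{d/2}\delta}\,\dfrac{\Gamma\left(\frac{d-1}{2}\right)}{\Gamma\left(\frac12\right)}|x|^{1-d}$ as $|x|\to 0^+$; \item $G(x)\sim \dfrac{\lambda}{4\pi^{d/2}\delta}\,\Gamma\left(\frac{d-2}{2}\right)|x|^{2-d}$ as $|x|\to\infty$. \end{enumerate}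
   Context: $\mathbb{E}[e^{-sS(t)}]=e^{-t\phi(s)}$. The potential density $u$ is the density of the potential measure $U(A)=\mathbb{E}\int_0^\infty\mathbf{1}_{\{S(t)\in A\}}dt$, so $\int_0^\infty e^{-st}u(t)\,dt=1/\phi(s)$. $f\sim g$ means $f/g\to1$. *)

theory Defs
  imports "HOL-Analysis.Analysis" "HOL-Library.Landau_Symbols"
begin

definition phi_IG :: "real \<Rightarrow> real \<Rightarrow> real \<Rightarrow> real" where
  "phi_IG \<delta> lam s = \<delta> * (sqrt (2 * s + lam\<^sup>2) - lam)"

text \<open>Transition density of the d-dimensional Brownian motion (generator Laplacian),
  d = CARD('n).\<close>
definition heat_kernel :: "real \<Rightarrow> real ^ 'n \<Rightarrow> real ^ 'n \<Rightarrow> real" where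
  "heat_kernel t x y =
     (4 * pi * t) powr (- real CARD('n) / 2) * exp (- (norm (x - y))\<^sup>2 / (4 * t))"

definition is_potential_density :: "(real \<Rightarrow> real) \<Rightarrow> (real \<Rightarrow> real) \<Rightarrow> bool" where
  "is_potential_density phi u \<longleftrightarrow>
     u \<in> borel_measurable lborel \<and> (\<forall>t>0. u t \<ge> 0) \<and>
     (\<forall>s>0. set_integrable lborel {0<..} (\<lambda>t. exp (- s * t) * u t) \<and>
            (LINT t:{0<..}|lborel. exp (- s * t) * u t) = 1 / phi s)"

definition green_fun :: "(real \<Rightarrow> real) \<Rightarrow> real ^ 'n \<Rightarrow> real" where
  "green_fun u x = (LINT t:{0<..}|lborel. heat_kernel t 0 x * u t)"

end

theory Submission
  imports Defs
begin

(*
  The Laplace transform of the potential density inverts explicitly: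
    1 / phi(s) = (lam / s + 2 / sqrt (2 s + lam^2) + lam^2 / (s sqrt (2 s + lam^2))) / (2 delta),
  so u(t) = (lam + 2 k(t) + lam^2 int_0^t k) / (2 delta) with k(t) = (2 pi t)^(-1/2) exp (-lam^2 t / 2),
  almost everywhere; uniqueness of the Laplace transform follows from Stone-Weierstrass applied to
  the moments of exp (-t).  Substituting t = r^2 v with r = |x| gives
    G(x) = r^(2-d) int_0^oo p(v) u(r^2 v) dv,   p(v) = (4 pi v)^(-d/2) exp (-1 / (4 v)).
  As r -> oo, u(r^2 v) -> lam / delta, and as r -> 0, r u(r^2 v) -> (2 pi v)^(-1/2) / delta.  Both
  families are dominated by a multiple of p(v) (1 + v^(-1/2)), so dominated convergence reduces the
  two asymptotics to the Gamma integrals  int_0^oo p(v) v^(-a) dv = pi^(-d/2) 4^(a-1) Gamma(d/2 + a - 1)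
  for a = 0 and a = 1/2.
*)

section \<open>Gamma-type integrals on the half-line\<close>

lemma set_integral_lborel_eq_has_integral_nonneg:
  fixes f :: "real \<Rightarrow> real"
  assumes I: "(f has_integral I) S" and [measurable]: "S \<in> sets borel" "f \<in> borel_measurable borel"
    and nonneg: "\<And>x. x \<in> S \<Longrightarrow> f x \<ge> 0"
  shows "set_integrable lborel S f" "(LINT x:S|lborel. f x) = I"
proof -
  have "f absolutely_integrable_on S"
    using I nonneg by (intro nonnegative_absolutely_integrable_1) (auto simp: has_integral_integrable)
  moreover have "(\<lambda>x. indicator S x *\<^sub>R f x) \<in> borel_measurable lborel" by measurable
  ultimately show int: "set_integrable lborel S f"
    unfolding set_integrable_def by (simp add: integrable_completion)
  show "(LINT x:S|lborel. f x) = I"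
    using set_borel_integral_eq_integral(2)[OF int] I by (simp add: integral_unique)
qed

lemma set_integral_eq_nn_integral_indicator:
  fixes f :: "real \<Rightarrow> real"
  assumes "set_integrable lborel A f" and "\<And>x. x \<in> A \<Longrightarrow> f x \<ge> 0"
  shows "(\<integral>\<^sup>+x. ennreal (indicator A x * f x) \<partial>lborel) = ennreal (LINT x:A|lborel. f x)"
  using assms unfolding set_lebesgue_integral_def set_integrable_def
  by (subst nn_integral_eq_integral) (auto simp: indicator_def)

lemma set_integral_of_nn_integral_indicator:
  fixes f :: "real \<Rightarrow> real"
  assumes [measurable]: "f \<in> borel_measurable borel" "A \<in> sets borel"
    and nonneg: "\<And>x. x \<in> A \<Longrightarrow> f x \<ge> 0" and V: "V \<ge> 0"
    and N: "(\<integral>\<^sup>+x. ennreal (indicator A x * f x) \<partial>lborel) = ennreal V"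
  shows "set_integrable lborel A f" "(LINT x:A|lborel. f x) = V"
proof -
  have nonneg': "indicator A x * f x \<ge> 0" for x
    using nonneg[of x] by (auto simp: indicator_def)
  show "set_integrable lborel A f"
    unfolding set_integrable_def using N by (intro integrableI_nonneg) (auto simp: nonneg')
  have "(\<integral>x. indicator A x * f x \<partial>lborel) = enn2real (\<integral>\<^sup>+x. ennreal (indicator A x * f x) \<partial>lborel)"
    by (rule integral_eq_nn_integral) (auto simp: nonneg')
  then show "(LINT x:A|lborel. f x) = V"
    unfolding set_lebesgue_integral_def using N V by simp
qed

lemma Gamma_has_integral_Ioi:
  fixes a :: real assumes "a > 0"
  shows "((\<lambda>t. t powr (a - 1) * exp (- t)) has_integral Gamma a) {0<..}"
proof -
  have "((\<lambda>t. t powr (a - 1) / exp t) has_integral Gamma a) {0..}"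
    by (rule Gamma_integral_real[OF assms])
  then have "((\<lambda>t. t powr (a - 1) / exp t) has_integral Gamma a) {0<..}"
    by (rule has_integral_spike_set_eq[THEN iffD1, rotated -1])
       (auto intro: negligible_subset[OF negligible_empty])
  then show ?thesis by (simp add: exp_minus field_simps)
qed

lemma Gamma_scaled_has_integral_Ioi:
  fixes a c :: real assumes a: "a > 0" and c: "c > 0"
  shows "((\<lambda>t. t powr (a - 1) * exp (- (c * t))) has_integral Gamma a / c powr a) {0<..}"
proof -
  define f where "f y = y powr (a - 1) * exp (- y)" for y :: real
  have G: "(f has_integral Gamma a) {0<..}"
    unfolding f_def by (rule Gamma_has_integral_Ioi[OF a])
  have img: "(\<lambda>t. c * t) ` {0<..} = {0<..}"
  proof safe
    fix y :: real assume "y > 0"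
    then show "y \<in> (\<lambda>t. c * t) ` {0<..}" using c by (intro image_eqI[of _ _ "y / c"]) auto
  qed (use c in auto)
  have "f absolutely_integrable_on {0<..}"
    using G by (intro nonnegative_absolutely_integrable_1) (auto simp: f_def has_integral_integrable)
  then have "f absolutely_integrable_on ((\<lambda>t. c * t) ` {0<..}) \<and>
      integral ((\<lambda>t. c * t) ` {0<..}) f = Gamma a"
    using G img by (simp add: integral_unique)
  then have "(\<lambda>x. \<bar>c\<bar> * f (c * x)) absolutely_integrable_on {0<..} \<and>
      integral {0<..} (\<lambda>x. \<bar>c\<bar> * f (c * x)) = Gamma a"
    by (subst has_absolute_integral_change_of_variables_1'[where g="\<lambda>t. c * t" and g'="\<lambda>_. c"])
       (use c in \<open>auto intro!: derivative_eq_intros inj_onI\<close>)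
  then have "((\<lambda>x. \<bar>c\<bar> * f (c * x)) has_integral Gamma a) {0<..}"
    by (metis absolutely_integrable_on_def has_integral_integrable_integral)
  from has_integral_mult_right[OF this, of "1 / c powr a"]
  have "((\<lambda>x. 1 / c powr a * (\<bar>c\<bar> * f (c * x))) has_integral Gamma a / c powr a) {0<..}"
    by simp
  then show ?thesis
    by (rule has_integral_eq[rotated]) (use c in \<open>auto simp: f_def powr_mult powr_diff field_simps\<close>)
qed

lemma inverse_Gamma_has_integral_Ioi:
  fixes a b :: real assumes a: "a > 1" and b: "b > 0"
  shows "((\<lambda>t. t powr (- a) * exp (- (b / t))) has_integral b powr (1 - a) * Gamma (a - 1)) {0<..}"
proof -
  define f where "f t = t powr (- a) * exp (- (b / t))" for t :: real
  have jacobian: "\<bar>- b / w\<^sup>2\<bar> * f (b / w) = b powr (1 - a) * (w powr ((a - 1) - 1) * exp (- w))"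
    if "w > 0" for w
  proof -
    have "\<bar>- b / w\<^sup>2\<bar> * f (b / w) = b / w\<^sup>2 * (b powr (- a) * w powr a) * exp (- w)"
      using that b by (simp add: f_def powr_divide powr_minus divide_simps)
    also have "\<dots> = b powr (1 - a) * (w powr ((a - 1) - 1) * exp (- w))"
      using that b by (simp add: powr_diff powr_minus power2_eq_square field_simps powr_add)
    finally show ?thesis .
  qed
  have "((\<lambda>w. b powr (1 - a) * (w powr ((a - 1) - 1) * exp (- w))) has_integral
      b powr (1 - a) * Gamma (a - 1)) {0<..}"
    by (intro has_integral_mult_right Gamma_has_integral_Ioi) (use a in auto)
  then have G: "((\<lambda>w. \<bar>- b / w\<^sup>2\<bar> * f (b / w)) has_integral b powr (1 - a) * Gamma (a - 1)) {0<..}"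
    by (rule has_integral_eq[rotated]) (metis jacobian greaterThan_iff)
  have img: "(\<lambda>t. b / t) ` {0<..} = {0<..}"
  proof safe
    fix y :: real assume "y > 0"
    then show "y \<in> (\<lambda>t. b / t) ` {0<..}" using b by (intro image_eqI[of _ _ "b / y"]) auto
  qed (use b in auto)
  have "(\<lambda>w. \<bar>- b / w\<^sup>2\<bar> * f (b / w)) absolutely_integrable_on {0<..}"
    using G by (intro nonnegative_absolutely_integrable_1) (auto simp: f_def has_integral_integrable)
  then have "(\<lambda>w. \<bar>- b / w\<^sup>2\<bar> * f (b / w)) absolutely_integrable_on {0<..} \<and>
      integral {0<..} (\<lambda>w. \<bar>- b / w\<^sup>2\<bar> * f (b / w)) = b powr (1 - a) * Gamma (a - 1)"
    using G by (simp add: integral_unique)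
  then have "f absolutely_integrable_on ((\<lambda>t. b / t) ` {0<..}) \<and>
      integral ((\<lambda>t. b / t) ` {0<..}) f = b powr (1 - a) * Gamma (a - 1)"
    by (subst has_absolute_integral_change_of_variables_1'[where g="\<lambda>t. b / t" and g'="\<lambda>w. - b / w\<^sup>2", symmetric])
       (use b in \<open>auto intro!: derivative_eq_intros inj_onI simp: power2_eq_square field_simps\<close>)
  then show ?thesis unfolding img f_def
    by (metis absolutely_integrable_on_def has_integral_integrable_integral)
qed

lemma sqrt_mult_powr_neg_half: "t > 0 \<Longrightarrow> sqrt t * t powr - (1 / 2) = 1"
  by (simp add: powr_half_sqrt[symmetric] powr_add[symmetric])

lemma powr_neg_half_scale:
  fixes r v :: real assumes "r > 0" "v > 0"
  shows "(r\<^sup>2 * v) powr (- 1 / 2) = v powr (- 1 / 2) / r"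
proof -
  have "(r\<^sup>2 * v) powr (- 1 / 2) = (r\<^sup>2) powr (- 1 / 2) * v powr (- 1 / 2)"
    using assms by (subst powr_mult) auto
  also have "(r\<^sup>2) powr (- 1 / 2) = r powr (- 1)"
  proof -
    have "r\<^sup>2 = r powr 2" using assms by simp
    then have "(r\<^sup>2) powr (- 1 / 2) = r powr (2 * (- 1 / 2))" by (simp only: powr_powr)
    then show ?thesis by simp
  qed
  also have "r powr (- 1) = 1 / r"
    using assms by (simp add: powr_minus divide_inverse)
  finally show ?thesis by simp
qed

section \<open>Radial asymptotic equivalence\<close>

lemma filterlim_norm_at_0: "filterlim norm (at_right 0) (at (0 :: 'a :: real_normed_vector))"
  unfolding filterlim_at
proof
  show "\<forall>\<^sub>F x in at (0 :: 'a). norm x \<in> {0<..} \<and> norm x \<noteq> 0"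
    by (auto simp: eventually_at_filter)
  show "(norm \<longlongrightarrow> 0) (at (0 :: 'a))"
    using tendsto_norm_zero[OF tendsto_ident_at[of "0 :: 'a" UNIV]] by simp
qed

lemma asymp_equiv_at_0_radial:
  fixes H :: "real \<Rightarrow> real" and K q :: real
  assumes "((\<lambda>r. H r / r powr q) \<longlongrightarrow> K) (at_right 0)" and "K \<noteq> 0"
  shows "(\<lambda>x :: 'a :: real_normed_vector. H (norm x)) \<sim>[at 0] (\<lambda>x. K * norm x powr q)"
  using filterlim_compose[OF assms(1) filterlim_norm_at_0] assms(2) by (rule asymp_equivI'_const)

lemma asymp_equiv_at_infinity_radial:
  fixes H :: "real \<Rightarrow> real" and K q :: real
  assumes "((\<lambda>r. H r / r powr q) \<longlongrightarrow> K) at_top" and "K \<noteq> 0"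
  shows "(\<lambda>x :: 'a :: real_normed_vector. H (norm x)) \<sim>[at_infinity] (\<lambda>x. K * norm x powr q)"
  using filterlim_compose[OF assms(1) filterlim_norm_at_top] assms(2) by (rule asymp_equivI'_const)

section \<open>Uniqueness of the Laplace transform\<close>

lemma integrable_comp_exp_neg:
  fixes L :: "real measure" and g :: "real \<Rightarrow> real"
  assumes "finite_measure L" and sets_L: "sets L = sets borel" and pos: "AE t in L. t > 0"
    and g: "continuous_on UNIV g"
  shows "integrable L (\<lambda>t. g (exp (- t)))"
proof -
  interpret finite_measure L by fact
  have [measurable]: "g \<in> borel_measurable borel"
    using g by (rule borel_measurable_continuous_onI)
  have "compact (g ` {0..1})"
    by (intro compact_continuous_image continuous_on_subset[OF g]) auto
  then obtain B where B: "\<And>y. y \<in> {0..1} \<Longrightarrow> norm (g y) \<le> B"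
    by (meson bounded_iff compact_imp_bounded image_eqI)
  show ?thesis
  proof (rule integrable_const_bound[where B = B])
    show "AE t in L. norm (g (exp (- t))) \<le> B"
      using pos by eventually_elim (use B in force)
  qed (simp add: measurable_cong_sets[OF sets_L refl])
qed

lemma integral_comp_exp_neg_diff_le:
  fixes L :: "real measure" and g h :: "real \<Rightarrow> real"
  assumes "finite_measure L" "sets L = sets borel" and pos: "AE t in L. t > 0"
    and "continuous_on UNIV g" "continuous_on UNIV h"
    and close: "\<And>y. y \<in> {0..1} \<Longrightarrow> \<bar>g y - h y\<bar> \<le> e"
  shows "\<bar>(\<integral>t. g (exp (- t)) \<partial>L) - (\<integral>t. h (exp (- t)) \<partial>L)\<bar> \<le> e * measure L (space L)"
proof -
  interpret finite_measure L by fact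
  note int = integrable_comp_exp_neg[OF assms(1-3)]
  have "\<bar>(\<integral>t. g (exp (- t)) \<partial>L) - (\<integral>t. h (exp (- t)) \<partial>L)\<bar>
      = norm (\<integral>t. g (exp (- t)) - h (exp (- t)) \<partial>L)"
    using int[OF assms(4)] int[OF assms(5)] by simp
  also have "\<dots> \<le> (\<integral>t. norm (g (exp (- t)) - h (exp (- t))) \<partial>L)"
    by (rule integral_norm_bound)
  also have "\<dots> \<le> (\<integral>t. e \<partial>L)"
  proof (rule integral_mono_AE)
    show "AE t in L. norm (g (exp (- t)) - h (exp (- t))) \<le> e"
      using pos by eventually_elim (simp add: close)
  qed (use int[OF assms(4)] int[OF assms(5)] in auto)
  also have "\<dots> = e * measure L (space L)" by simp
  finally show ?thesis .
qed

text \<open>By Stone--Weierstrass, polynomials are uniformly dense in \<open>C[0,1]\<close>.\<close>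

lemma integral_comp_exp_neg_eq_if_moments_eq:
  fixes M N :: "real measure" and g :: "real \<Rightarrow> real"
  assumes fM: "finite_measure M" and fN: "finite_measure N"
    and sM: "sets M = sets borel" and sN: "sets N = sets borel"
    and aM: "AE t in M. t > 0" and aN: "AE t in N. t > 0"
    and moments: "\<And>n::nat. (\<integral>t. exp (- t) ^ n \<partial>M) = (\<integral>t. exp (- t) ^ n \<partial>N)"
    and g: "continuous_on UNIV g"
  shows "(\<integral>t. g (exp (- t)) \<partial>M) = (\<integral>t. g (exp (- t)) \<partial>N)"
proof -
  define C where "C = measure M (space M) + measure N (space N)"
  have bound: "\<bar>(\<integral>t. g (exp (- t)) \<partial>M) - (\<integral>t. g (exp (- t)) \<partial>N)\<bar> \<le> e * C" if e: "e > 0" for e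
  proof -
    obtain P where "real_polynomial_function P" and P: "\<And>y. y \<in> {0..1} \<Longrightarrow> \<bar>g y - P y\<bar> < e"
      using Stone_Weierstrass_real_polynomial_function[of "{0..1::real}" g e] g e
      by (auto intro: continuous_on_subset)
    then obtain a n where P_eq: "P = (\<lambda>y. \<Sum>i\<le>n. a i * y ^ i)"
      using real_polynomial_function_imp_sum by blast
    have P_cont: "continuous_on UNIV P"
      unfolding P_eq by (intro continuous_intros)
    have P_integral: "(\<integral>t. P (exp (- t)) \<partial>L) = (\<Sum>i\<le>n. a i * (\<integral>t. exp (- t) ^ i \<partial>L))"
      if "finite_measure L" "sets L = sets borel" "AE t in L. t > 0" for L
    proof -
      have "integrable L (\<lambda>t. exp (- t) ^ i)" for i
        by (rule integrable_comp_exp_neg[OF that, of "\<lambda>y. y ^ i"]) (intro continuous_intros)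
      then show ?thesis unfolding P_eq by (simp add: integral_sum)
    qed
    have approx: "\<bar>(\<integral>t. g (exp (- t)) \<partial>L) - (\<integral>t. P (exp (- t)) \<partial>L)\<bar> \<le> e * measure L (space L)"
      if "finite_measure L" "sets L = sets borel" "AE t in L. t > 0" for L
      using P by (intro integral_comp_exp_neg_diff_le[OF that g P_cont]) (simp add: less_imp_le)
    show ?thesis
      using approx[OF fM sM aM] approx[OF fN sN aN] P_integral[OF fM sM aM] P_integral[OF fN sN aN]
      unfolding moments C_def by (simp add: algebra_simps)
  qed
  have "C \<ge> 0" by (simp add: C_def)
  have "\<bar>(\<integral>t. g (exp (- t)) \<partial>M) - (\<integral>t. g (exp (- t)) \<partial>N)\<bar> \<le> 0 + e" if "e > 0" for e
  proof -
    have "\<bar>(\<integral>t. g (exp (- t)) \<partial>M) - (\<integral>t. g (exp (- t)) \<partial>N)\<bar> \<le> e / (C + 1) * C"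
      using \<open>C \<ge> 0\<close> that by (intro bound) simp
    also have "\<dots> \<le> e"
      using \<open>C \<ge> 0\<close> that by (simp add: field_simps)
    finally show ?thesis by simp
  qed
  then show ?thesis
    using field_le_epsilon[of "\<bar>(\<integral>t. g (exp (- t)) \<partial>M) - (\<integral>t. g (exp (- t)) \<partial>N)\<bar>" 0] by simp
qed

lemma tendsto_clamped_ramp:
  fixes c y :: real
  shows "(\<lambda>n::nat. max 0 (min 1 (real n * (c - y)))) \<longlonglongrightarrow> of_bool (y < c)"
proof (cases "y < c")
  case True
  have "eventually (\<lambda>n::nat. real n \<ge> 1 / (c - y)) sequentially"
    by (rule eventually_sequentiallyI[of "nat \<lceil>1 / (c - y)\<rceil>"]) linarith
  then have "eventually (\<lambda>n::nat. max 0 (min 1 (real n * (c - y))) = 1) sequentially"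
    by eventually_elim (use True in \<open>auto simp: field_simps\<close>)
  then show ?thesis using True by (simp add: tendsto_eventually)
next
  case False
  have "max 0 (min 1 (real n * (c - y))) = 0" for n :: nat
  proof -
    have "real n * (c - y) \<le> 0" using False by (intro mult_nonneg_nonpos) auto
    then show ?thesis by simp
  qed
  then show ?thesis using False by simp
qed

lemma measure_eq_if_exp_moments_eq:
  fixes M N :: "real measure"
  assumes fM: "finite_measure M" and fN: "finite_measure N"
    and sM: "sets M = sets borel" and sN: "sets N = sets borel"
    and aM: "AE t in M. t > 0" and aN: "AE t in N. t > 0"
    and moments: "\<And>n::nat. (\<integral>t. exp (- t) ^ n \<partial>M) = (\<integral>t. exp (- t) ^ n \<partial>N)"
  shows "M = N"
proof -
  interpret M: finite_measure M by fact
  interpret N: finite_measure N by fact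
  define ramp where "ramp x n y = max 0 (min 1 (real n * (exp (- x) - y)))" for x :: real and n :: nat and y
  have ramp_lim: "(\<lambda>n. \<integral>t. ramp x n (exp (- t)) \<partial>L) \<longlonglongrightarrow> measure L {x<..}"
    if "finite_measure L" "sets L = sets borel" for L :: "real measure" and x :: real
  proof -
    interpret L: finite_measure L by fact
    have "(\<lambda>n. \<integral>t. ramp x n (exp (- t)) \<partial>L) \<longlonglongrightarrow> (\<integral>t. indicator {x<..} t \<partial>L)"
    proof (rule integral_dominated_convergence[where w = "\<lambda>_. 1"])
      show "AE t in L. (\<lambda>n. ramp x n (exp (- t))) \<longlonglongrightarrow> indicator {x<..} t"
      proof (rule AE_I2)
        fix t :: real
        have "(exp (- t) < exp (- x)) = (x < t)" by simp
        then show "(\<lambda>n. ramp x n (exp (- t))) \<longlonglongrightarrow> indicator {x<..} t"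
          using tendsto_clamped_ramp[of "exp (- x)" "exp (- t)"]
          by (simp only: ramp_def indicator_def greaterThan_iff)
      qed
    qed (auto simp: ramp_def measurable_cong_sets[OF that(2) refl])
    then show ?thesis using that(2) by simp
  qed
  show ?thesis
  proof (rule measure_eqI_lessThan[OF sM sN])
    fix x :: real
    show "emeasure M {x<..} < \<infinity>" by (simp add: M.emeasure_eq_measure)
    have "(\<integral>t. ramp x n (exp (- t)) \<partial>M) = (\<integral>t. ramp x n (exp (- t)) \<partial>N)" for n
      by (rule integral_comp_exp_neg_eq_if_moments_eq[OF fM fN sM sN aM aN moments])
         (unfold ramp_def, intro continuous_intros)
    then have "measure M {x<..} = measure N {x<..}"
      using ramp_lim[OF fM sM, of x] ramp_lim[OF fN sN, of x] LIMSEQ_unique by simp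
    then show "emeasure M {x<..} = emeasure N {x<..}"
      by (simp add: M.emeasure_eq_measure N.emeasure_eq_measure)
  qed
qed

definition exp_density :: "(real \<Rightarrow> real) \<Rightarrow> real measure" where
  "exp_density h = density lborel (\<lambda>t. ennreal (indicator {0<..} t * exp (- t) * h t))"

lemma sets_exp_density [simp]: "sets (exp_density h) = sets borel"
  by (simp add: exp_density_def)

lemma AE_exp_density_pos:
  "h \<in> borel_measurable borel \<Longrightarrow> AE t in exp_density h. t > 0"
  unfolding exp_density_def by (subst AE_density) (auto simp: indicator_def)

lemma finite_measure_exp_density:
  fixes h :: "real \<Rightarrow> real"
  assumes [measurable]: "h \<in> borel_measurable borel" and nonneg: "\<And>t. t > 0 \<Longrightarrow> h t \<ge> 0"
    and int: "set_integrable lborel {0<..} (\<lambda>t. exp (- 1 * t) * h t)"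
  shows "finite_measure (exp_density h)"
proof -
  define k where "k t = indicator {0<..} t * exp (- t) * h t" for t
  have [measurable]: "k \<in> borel_measurable borel" unfolding k_def by measurable
  have "exp_density h = density lborel k" unfolding exp_density_def k_def[abs_def] ..
  then have "emeasure (exp_density h) (space (exp_density h)) = (\<integral>\<^sup>+t. k t \<partial>lborel)"
    by (simp add: emeasure_density)
  also have "\<dots> < \<infinity>"
  proof -
    have "integrable lborel k"
      using int unfolding set_integrable_def by (simp add: k_def[abs_def] mult.assoc)
    moreover have "k t \<ge> 0" for t
      using nonneg[of t] by (auto simp: k_def indicator_def)
    ultimately show ?thesis by (simp add: integrable_iff_bounded less_top)
  qed
  finally show ?thesis by (intro finite_measureI) simp
qed

lemma integral_exp_density_power:
  fixes h :: "real \<Rightarrow> real"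
  assumes [measurable]: "h \<in> borel_measurable borel" and nonneg: "\<And>t. t > 0 \<Longrightarrow> h t \<ge> 0"
  shows "(\<integral>t. exp (- t) ^ n \<partial>exp_density h) = (LINT t:{0<..}|lborel. exp (- (real n + 1) * t) * h t)"
proof -
  have "exp (- t) * exp (- t) ^ n = exp (- (real n + 1) * t)" for t :: real
    by (simp add: exp_of_nat_mult[symmetric] exp_add[symmetric] algebra_simps)
  then show ?thesis
    unfolding exp_density_def set_lebesgue_integral_def using nonneg
    by (subst integral_density) (auto simp: indicator_def mult_ac intro!: Bochner_Integration.integral_cong)
qed

lemma laplace_transform_unique_AE:
  fixes f g :: "real \<Rightarrow> real"
  assumes f_meas [measurable]: "f \<in> borel_measurable borel"
    and g_meas [measurable]: "g \<in> borel_measurable borel"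
    and f_nonneg: "\<And>t. t > 0 \<Longrightarrow> f t \<ge> 0" and g_nonneg: "\<And>t. t > 0 \<Longrightarrow> g t \<ge> 0"
    and f_int: "\<And>s. s > 0 \<Longrightarrow> set_integrable lborel {0<..} (\<lambda>t. exp (- s * t) * f t)"
    and g_int: "\<And>s. s > 0 \<Longrightarrow> set_integrable lborel {0<..} (\<lambda>t. exp (- s * t) * g t)"
    and eq: "\<And>s. s > 0 \<Longrightarrow>
      (LINT t:{0<..}|lborel. exp (- s * t) * f t) = (LINT t:{0<..}|lborel. exp (- s * t) * g t)"
  shows "AE t in lborel. t > 0 \<longrightarrow> f t = g t"
proof -
  have "(\<integral>t. exp (- t) ^ n \<partial>exp_density f) = (\<integral>t. exp (- t) ^ n \<partial>exp_density g)" for n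
    using integral_exp_density_power[OF f_meas f_nonneg, of n] integral_exp_density_power[OF g_meas g_nonneg, of n]
      eq[of "real n + 1"] by simp
  then have "exp_density f = exp_density g"
    by (intro measure_eq_if_exp_moments_eq finite_measure_exp_density AE_exp_density_pos sets_exp_density
          f_meas g_meas f_nonneg g_nonneg f_int g_int) auto
  then have "AE t in lborel. ennreal (indicator {0<..} t * exp (- t) * f t) = ennreal (indicator {0<..} t * exp (- t) * g t)"
    unfolding exp_density_def by (subst (asm) sigma_finite_measure.density_unique_iff[OF sigma_finite_lborel]) auto
  then show ?thesis
    by eventually_elim (use f_nonneg g_nonneg in auto)
qed

section \<open>The potential density of the inverse Gaussian subordinator\<close>

lemma exp_neg_has_integral_Ioi:
  fixes s :: real assumes "s > 0"
  shows "((\<lambda>t. exp (- s * t)) has_integral 1 / s) {0<..}"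
proof -
  have "((\<lambda>t. t powr (1 - 1) * exp (- (s * t))) has_integral Gamma 1 / s powr 1) {0<..}"
    by (rule Gamma_scaled_has_integral_Ioi) (use assms in auto)
  then show ?thesis
    by (subst has_integral_cong[symmetric, where f = "\<lambda>t. t powr (1 - 1) * exp (- (s * t))"])
       (use assms in auto)
qed

lemma nn_integral_exp_neg_Ioi:
  fixes s \<tau> :: real assumes s: "s > 0"
  shows "(\<integral>\<^sup>+t. ennreal (indicator {\<tau><..} t * exp (- s * t)) \<partial>lborel) = ennreal (exp (- s * \<tau>) / s)"
proof -
  have "(\<integral>\<^sup>+t. ennreal (indicator {0<..} t * exp (- s * t)) \<partial>lborel) = ennreal (1 / s)"
    using set_integral_lborel_eq_has_integral_nonneg[OF exp_neg_has_integral_Ioi[OF s]]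
    by (subst set_integral_eq_nn_integral_indicator) auto
  then have "(\<integral>\<^sup>+t. ennreal (exp (- s * \<tau>)) * ennreal (indicator {0<..} t * exp (- s * t)) \<partial>lborel)
      = ennreal (exp (- s * \<tau>) / s)"
    using s by (subst nn_integral_cmult) (auto simp: ennreal_mult[symmetric])
  moreover have "(\<integral>\<^sup>+t. ennreal (indicator {\<tau><..} t * exp (- s * t)) \<partial>lborel)
      = (\<integral>\<^sup>+t. ennreal (indicator {\<tau><..} (\<tau> + 1 * t) * exp (- s * (\<tau> + 1 * t))) \<partial>lborel)"
    using nn_integral_real_affine[of "\<lambda>t. ennreal (indicator {\<tau><..} t * exp (- s * t))" 1 \<tau>] by simp
  ultimately show ?thesis
    by (simp add: indicator_def ennreal_mult[symmetric] exp_add[symmetric] algebra_simps)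
qed

text \<open>Tonelli on the triangle \<open>0 < \<tau> < t\<close>.\<close>

lemma nn_integral_laplace_primitive:
  fixes f :: "real \<Rightarrow> real" and s :: real
  assumes [measurable]: "f \<in> borel_measurable borel" and nonneg: "\<And>t. f t \<ge> 0"
    and int: "\<And>t. set_integrable lborel {0<..<t} f" and s: "s > 0"
  shows "(\<integral>\<^sup>+t. ennreal (indicator {0<..} t * (exp (- s * t) * (LINT \<tau>:{0<..<t}|lborel. f \<tau>))) \<partial>lborel)
    = (\<integral>\<^sup>+\<tau>. ennreal (indicator {0<..} \<tau> * ((1 / s) * (exp (- s * \<tau>) * f \<tau>))) \<partial>lborel)"
proof -
  define G where "G t \<tau> = ennreal (if 0 < \<tau> \<and> \<tau> < t then exp (- s * t) * f \<tau> else 0)" for t \<tau> :: real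
  have G_meas: "case_prod (\<lambda>\<tau> t. G t \<tau>) \<in> borel_measurable (lborel \<Otimes>\<^sub>M lborel)"
    unfolding G_def by measurable
  have "(\<integral>\<^sup>+t. ennreal (indicator {0<..} t * (exp (- s * t) * (LINT \<tau>:{0<..<t}|lborel. f \<tau>))) \<partial>lborel)
      = (\<integral>\<^sup>+t. (\<integral>\<^sup>+\<tau>. G t \<tau> \<partial>lborel) \<partial>lborel)"
  proof (intro nn_integral_cong)
    fix t :: real
    have F_nonneg: "(LINT \<tau>:{0<..<t}|lborel. f \<tau>) \<ge> 0"
      unfolding set_lebesgue_integral_def by (intro integral_nonneg_AE) (auto simp: nonneg)
    have "ennreal (indicator {0<..} t * exp (- s * t)) * ennreal (LINT \<tau>:{0<..<t}|lborel. f \<tau>)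
        = (\<integral>\<^sup>+\<tau>. ennreal (indicator {0<..} t * exp (- s * t)) * ennreal (indicator {0<..<t} \<tau> * f \<tau>) \<partial>lborel)"
      by (simp add: set_integral_eq_nn_integral_indicator[OF int] nonneg nn_integral_cmult)
    also have "\<dots> = (\<integral>\<^sup>+\<tau>. G t \<tau> \<partial>lborel)"
      by (intro nn_integral_cong) (auto simp: G_def indicator_def ennreal_mult[symmetric] nonneg)
    finally show "ennreal (indicator {0<..} t * (exp (- s * t) * (LINT \<tau>:{0<..<t}|lborel. f \<tau>)))
        = (\<integral>\<^sup>+\<tau>. G t \<tau> \<partial>lborel)"
      by (simp add: ennreal_mult[symmetric] F_nonneg mult.assoc)
  qed
  also have "\<dots> = (\<integral>\<^sup>+\<tau>. (\<integral>\<^sup>+t. G t \<tau> \<partial>lborel) \<partial>lborel)"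
    by (rule lborel_pair.Fubini'[OF G_meas])
  also have "\<dots> = (\<integral>\<^sup>+\<tau>. ennreal (indicator {0<..} \<tau> * ((1 / s) * (exp (- s * \<tau>) * f \<tau>))) \<partial>lborel)"
  proof (intro nn_integral_cong)
    fix \<tau> :: real
    show "(\<integral>\<^sup>+t. G t \<tau> \<partial>lborel) = ennreal (indicator {0<..} \<tau> * ((1 / s) * (exp (- s * \<tau>) * f \<tau>)))"
    proof (cases "\<tau> > 0")
      case True
      have "(\<integral>\<^sup>+t. G t \<tau> \<partial>lborel)
          = (\<integral>\<^sup>+t. ennreal (f \<tau>) * ennreal (indicator {\<tau><..} t * exp (- s * t)) \<partial>lborel)"
        using True
        by (intro nn_integral_cong) (auto simp: G_def indicator_def ennreal_mult[symmetric] nonneg mult.commute)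
      also have "\<dots> = ennreal (f \<tau>) * ennreal (exp (- s * \<tau>) / s)"
        using nn_integral_exp_neg_Ioi[OF s, of \<tau>] by (subst nn_integral_cmult) auto
      finally show ?thesis
        using True s by (simp add: ennreal_mult[symmetric] nonneg mult.commute)
    qed (simp add: G_def)
  qed
  finally show ?thesis .
qed

lemma laplace_transform_primitive:
  fixes f :: "real \<Rightarrow> real" and s :: real
  assumes [measurable]: "f \<in> borel_measurable borel" and nonneg: "\<And>t. f t \<ge> 0"
    and int: "set_integrable lborel {0<..} f" and s: "s > 0"
  shows "set_integrable lborel {0<..} (\<lambda>t. exp (- s * t) * (LINT \<tau>:{0<..<t}|lborel. f \<tau>))"
    and "(LINT t:{0<..}|lborel. exp (- s * t) * (LINT \<tau>:{0<..<t}|lborel. f \<tau>))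
      = (LINT \<tau>:{0<..}|lborel. exp (- s * \<tau>) * f \<tau>) / s"
proof -
  define F where "F t = (LINT \<tau>:{0<..<t}|lborel. f \<tau>)" for t
  have int_sub: "set_integrable lborel {0<..<t} f" for t
    by (rule set_integrable_subset[OF int]) auto
  have F_nonneg: "F t \<ge> 0" for t
    unfolding F_def set_lebesgue_integral_def by (intro integral_nonneg_AE) (auto simp: nonneg)
  have "mono F"
    unfolding F_def set_lebesgue_integral_def mono_def using int_sub
    by (auto intro!: integral_mono simp: set_integrable_def nonneg indicator_def)
  then have [measurable]: "F \<in> borel_measurable borel" by (rule borel_measurable_mono)
  have exp_f_int: "set_integrable lborel {0<..} (\<lambda>\<tau>. exp (- s * \<tau>) * f \<tau>)"
  proof (rule set_integrable_bound[OF int])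
    show "set_borel_measurable lborel {0<..} (\<lambda>\<tau>. exp (- s * \<tau>) * f \<tau>)"
      unfolding set_borel_measurable_def by measurable
    show "AE \<tau> in lborel. \<tau> \<in> {0<..} \<longrightarrow> norm (exp (- s * \<tau>) * f \<tau>) \<le> norm (f \<tau>)"
      using s by (intro AE_I2) (auto simp: nonneg intro!: mult_left_le_one_le)
  qed
  have "(\<integral>\<^sup>+t. ennreal (indicator {0<..} t * (exp (- s * t) * F t)) \<partial>lborel)
      = (\<integral>\<^sup>+\<tau>. ennreal (indicator {0<..} \<tau> * ((1 / s) * (exp (- s * \<tau>) * f \<tau>))) \<partial>lborel)"
    unfolding F_def by (rule nn_integral_laplace_primitive[OF _ nonneg int_sub s]) simp
  also have "\<dots> = ennreal ((LINT \<tau>:{0<..}|lborel. exp (- s * \<tau>) * f \<tau>) / s)"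
    using exp_f_int s by (subst set_integral_eq_nn_integral_indicator) (auto simp: nonneg)
  finally have N: "(\<integral>\<^sup>+t. ennreal (indicator {0<..} t * (exp (- s * t) * F t)) \<partial>lborel)
      = ennreal ((LINT \<tau>:{0<..}|lborel. exp (- s * \<tau>) * f \<tau>) / s)" .
  have "(LINT \<tau>:{0<..}|lborel. exp (- s * \<tau>) * f \<tau>) \<ge> 0"
    unfolding set_lebesgue_integral_def by (intro integral_nonneg_AE) (simp add: nonneg)
  moreover have "(\<lambda>t. exp (- s * t) * F t) \<in> borel_measurable borel" by measurable
  ultimately have "set_integrable lborel {0<..} (\<lambda>t. exp (- s * t) * F t)"
      "(LINT t:{0<..}|lborel. exp (- s * t) * F t) = (LINT \<tau>:{0<..}|lborel. exp (- s * \<tau>) * f \<tau>) / s"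
    using set_integral_of_nn_integral_indicator[OF _ _ _ _ N] s by (auto simp: F_nonneg)
  then show "set_integrable lborel {0<..} (\<lambda>t. exp (- s * t) * (LINT \<tau>:{0<..<t}|lborel. f \<tau>))"
    "(LINT t:{0<..}|lborel. exp (- s * t) * (LINT \<tau>:{0<..<t}|lborel. f \<tau>))
      = (LINT \<tau>:{0<..}|lborel. exp (- s * \<tau>) * f \<tau>) / s"
    unfolding F_def .
qed

definition ig_kernel :: "real \<Rightarrow> real \<Rightarrow> real" where
  "ig_kernel lam t = t powr (- 1 / 2) * exp (- (lam\<^sup>2 / 2 * t)) / sqrt (2 * pi)"

definition ig_kernel_primitive :: "real \<Rightarrow> real \<Rightarrow> real" where
  "ig_kernel_primitive lam t = (LINT \<tau>:{0<..<t}|lborel. ig_kernel lam \<tau>)"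

text \<open>The inverse Laplace transform of \<open>1 / phi_IG \<delta> lam\<close>: the kernel has Laplace transform
  \<open>1 / sqrt (2 * s + lam\<^sup>2)\<close>, and
  \<open>1 / phi_IG \<delta> lam s = (lam / s + 2 / sqrt (2 * s + lam\<^sup>2) + lam\<^sup>2 / (s * sqrt (2 * s + lam\<^sup>2))) / (2 * \<delta>)\<close>.\<close>

definition ig_potential :: "real \<Rightarrow> real \<Rightarrow> real \<Rightarrow> real" where
  "ig_potential \<delta> lam t = (lam + 2 * ig_kernel lam t + lam\<^sup>2 * ig_kernel_primitive lam t) / (2 * \<delta>)"

lemma ig_kernel_measurable [measurable]: "ig_kernel lam \<in> borel_measurable borel"
  unfolding ig_kernel_def by measurable

lemma ig_kernel_nonneg: "ig_kernel lam t \<ge> 0"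
  unfolding ig_kernel_def by simp

lemma ig_kernel_le: "t \<ge> 0 \<Longrightarrow> ig_kernel lam t \<le> t powr (- 1 / 2) / sqrt (2 * pi)"
  unfolding ig_kernel_def by (intro divide_right_mono mult_left_le) auto

lemma ig_kernel_laplace_has_integral:
  fixes lam s :: real assumes lam: "lam > 0" and s: "s \<ge> 0"
  shows "((\<lambda>t. exp (- s * t) * ig_kernel lam t) has_integral 1 / sqrt (2 * s + lam\<^sup>2)) {0<..}"
proof -
  define c where "c = s + lam\<^sup>2 / 2"
  have c: "c > 0" using lam s by (simp add: c_def add_nonneg_pos)
  have "((\<lambda>t. 1 / sqrt (2 * pi) * (t powr (1/2 - 1) * exp (- (c * t)))) has_integral
      1 / sqrt (2 * pi) * (Gamma (1/2) / c powr (1/2))) {0<..}"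
    by (intro has_integral_mult_right Gamma_scaled_has_integral_Ioi) (use c in auto)
  moreover have "1 / sqrt (2 * pi) * (Gamma (1/2) / c powr (1/2)) = 1 / sqrt (2 * s + lam\<^sup>2)"
  proof -
    have "1 / sqrt (2 * pi) * (Gamma (1/2) / c powr (1/2)) = 1 / (sqrt 2 * sqrt c)"
      using c by (simp add: Gamma_one_half_real powr_half_sqrt real_sqrt_mult)
    also have "sqrt 2 * sqrt c = sqrt (2 * s + lam\<^sup>2)"
      by (simp add: c_def real_sqrt_mult[symmetric] algebra_simps)
    finally show ?thesis .
  qed
  ultimately show ?thesis
    by (subst has_integral_cong[symmetric])
       (auto simp: ig_kernel_def c_def exp_add[symmetric] algebra_simps)
qed

lemma ig_kernel_laplace:
  fixes lam s :: real assumes "lam > 0" and "s \<ge> 0"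
  shows "set_integrable lborel {0<..} (\<lambda>t. exp (- s * t) * ig_kernel lam t)"
    "(LINT t:{0<..}|lborel. exp (- s * t) * ig_kernel lam t) = 1 / sqrt (2 * s + lam\<^sup>2)"
  using set_integral_lborel_eq_has_integral_nonneg[OF ig_kernel_laplace_has_integral[OF assms]]
  by (auto simp: ig_kernel_nonneg)

lemma ig_kernel_integral:
  fixes lam :: real assumes "lam > 0"
  shows "set_integrable lborel {0<..} (ig_kernel lam)" "(LINT t:{0<..}|lborel. ig_kernel lam t) = 1 / lam"
  using ig_kernel_laplace[OF assms order.refl] assms by simp_all

lemma ig_kernel_primitive_nonneg: "ig_kernel_primitive lam t \<ge> 0"
  unfolding ig_kernel_primitive_def set_lebesgue_integral_def
  by (intro integral_nonneg_AE) (auto simp: ig_kernel_nonneg)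

lemma ig_kernel_set_integral_mono:
  fixes lam :: real assumes lam: "lam > 0"
    and "A \<subseteq> B" "B \<subseteq> {0<..}" "A \<in> sets lborel" "B \<in> sets lborel"
  shows "(LINT \<tau>:A|lborel. ig_kernel lam \<tau>) \<le> (LINT \<tau>:B|lborel. ig_kernel lam \<tau>)"
proof -
  note int = ig_kernel_integral(1)[OF lam]
  have "set_integrable lborel A (ig_kernel lam)" "set_integrable lborel B (ig_kernel lam)"
    using set_integrable_subset[OF int assms(4)] set_integrable_subset[OF int assms(5)] assms(2,3)
    by auto
  then show ?thesis
    unfolding set_lebesgue_integral_def set_integrable_def using assms(2)
    by (intro integral_mono) (auto simp: ig_kernel_nonneg indicator_def)
qed

lemma ig_kernel_primitive_le:
  fixes lam :: real assumes lam: "lam > 0"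
  shows "ig_kernel_primitive lam t \<le> 1 / lam"
proof -
  have "ig_kernel_primitive lam t \<le> (LINT \<tau>:{0<..}|lborel. ig_kernel lam \<tau>)"
    unfolding ig_kernel_primitive_def by (rule ig_kernel_set_integral_mono[OF lam]) auto
  then show ?thesis using ig_kernel_integral(2)[OF lam] by simp
qed

lemma ig_kernel_primitive_measurable [measurable]:
  fixes lam :: real assumes lam: "lam > 0"
  shows "ig_kernel_primitive lam \<in> borel_measurable borel"
proof (rule borel_measurable_mono)
  show "mono (ig_kernel_primitive lam)"
    unfolding mono_def ig_kernel_primitive_def by (auto intro: ig_kernel_set_integral_mono[OF lam])
qed

lemma ig_kernel_primitive_tendsto:
  fixes lam :: real assumes lam: "lam > 0"
  shows "(ig_kernel_primitive lam \<longlongrightarrow> 1 / lam) at_top"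
proof -
  have "((\<lambda>t. \<integral>\<tau>. indicator {0<..<t} \<tau> * ig_kernel lam \<tau> \<partial>lborel)
      \<longlongrightarrow> (\<integral>\<tau>. indicator {0<..} \<tau> * ig_kernel lam \<tau> \<partial>lborel)) at_top"
  proof (rule integral_dominated_convergence_at_top[where w = "\<lambda>\<tau>. indicator {0<..} \<tau> * ig_kernel lam \<tau>"])
    show "integrable lborel (\<lambda>\<tau>. indicator {0<..} \<tau> * ig_kernel lam \<tau>)"
      using ig_kernel_integral(1)[OF lam] by (simp add: set_integrable_def)
    show "AE \<tau> in lborel. ((\<lambda>t. indicator {0<..<t} \<tau> * ig_kernel lam \<tau>)
        \<longlongrightarrow> indicator {0<..} \<tau> * ig_kernel lam \<tau>) at_top"
    proof (intro AE_I2 tendsto_eventually)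
      fix \<tau> :: real
      show "\<forall>\<^sub>F t in at_top. indicator {0<..<t} \<tau> * ig_kernel lam \<tau> = indicator {0<..} \<tau> * ig_kernel lam \<tau>"
        using eventually_gt_at_top[of \<tau>] by eventually_elim (auto simp: indicator_def)
    qed
    show "\<forall>\<^sub>F t in at_top. AE \<tau> in lborel.
        norm (indicator {0<..<t} \<tau> * ig_kernel lam \<tau>) \<le> indicator {0<..} \<tau> * ig_kernel lam \<tau>"
      by (intro always_eventually allI AE_I2) (auto simp: indicator_def ig_kernel_nonneg)
  qed auto
  then show ?thesis
    using ig_kernel_integral(2)[OF lam]
    by (simp add: ig_kernel_primitive_def[abs_def] set_lebesgue_integral_def)
qed

lemma ig_kernel_primitive_laplace:
  fixes lam s :: real assumes lam: "lam > 0" and s: "s > 0"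
  shows "set_integrable lborel {0<..} (\<lambda>t. exp (- s * t) * ig_kernel_primitive lam t)"
    "(LINT t:{0<..}|lborel. exp (- s * t) * ig_kernel_primitive lam t) = 1 / (s * sqrt (2 * s + lam\<^sup>2))"
  using laplace_transform_primitive[OF ig_kernel_measurable ig_kernel_nonneg ig_kernel_integral(1)[OF lam] s]
    ig_kernel_laplace(2)[OF lam less_imp_le[OF s]]
  unfolding ig_kernel_primitive_def by simp_all

lemma ig_potential_measurable [measurable]:
  fixes lam :: real assumes "lam > 0"
  shows "ig_potential \<delta> lam \<in> borel_measurable borel"
  using ig_kernel_primitive_measurable[OF assms] unfolding ig_potential_def[abs_def] by measurable

lemma ig_potential_nonneg:
  fixes lam \<delta> :: real assumes "\<delta> > 0" "lam > 0"
  shows "ig_potential \<delta> lam t \<ge> 0"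
  unfolding ig_potential_def using assms
  by (intro divide_nonneg_pos add_nonneg_nonneg mult_nonneg_nonneg ig_kernel_nonneg ig_kernel_primitive_nonneg)
     auto

lemma inverse_phi_IG_eq:
  fixes s lam \<delta> :: real assumes s: "s > 0" and lam: "lam > 0" and \<delta>: "\<delta> > 0"
  shows "1 / phi_IG \<delta> lam s
    = (lam * (1 / s) + 2 * (1 / sqrt (2 * s + lam\<^sup>2)) + lam\<^sup>2 * (1 / (s * sqrt (2 * s + lam\<^sup>2)))) / (2 * \<delta>)"
proof -
  define r where "r = sqrt (2 * s + lam\<^sup>2)"
  have r2: "r\<^sup>2 = 2 * s + lam\<^sup>2" unfolding r_def using s by simp
  have "sqrt (lam\<^sup>2) < r" unfolding r_def by (rule real_sqrt_less_mono) (use s in simp)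
  then have r_gt: "r > lam" using lam by simp
  then have r_pos: "r > 0" using lam by simp
  have "lam * (1 / s) + 2 * (1 / r) + lam\<^sup>2 * (1 / (s * r)) = (lam * r + 2 * s + lam\<^sup>2) / (s * r)"
    using s r_pos by (simp add: field_simps)
  also have "lam * r + 2 * s + lam\<^sup>2 = r * (r + lam)"
    using r2 by (simp add: algebra_simps power2_eq_square)
  finally have sum_eq: "lam * (1 / s) + 2 * (1 / r) + lam\<^sup>2 * (1 / (s * r)) = (r + lam) / s"
    using r_pos by simp
  have s_eq: "s = (r + lam) * (r - lam) / 2"
    using r2 by (simp add: algebra_simps power2_eq_square)
  have "lam * lam < r * r" using r_gt lam by (intro mult_strict_mono) auto
  then have "(r + lam) / s / (2 * \<delta>) = 1 / (\<delta> * (r - lam))"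
    unfolding s_eq using r_gt lam \<delta> by (simp add: field_simps)
  with sum_eq have "1 / (\<delta> * (r - lam)) = (lam * (1 / s) + 2 * (1 / r) + lam\<^sup>2 * (1 / (s * r))) / (2 * \<delta>)"
    by simp
  then show ?thesis unfolding phi_IG_def r_def by simp
qed

lemma ig_potential_laplace:
  fixes s lam \<delta> :: real assumes s: "s > 0" and lam: "lam > 0" and \<delta>: "\<delta> > 0"
  shows "set_integrable lborel {0<..} (\<lambda>t. exp (- s * t) * ig_potential \<delta> lam t)"
    "(LINT t:{0<..}|lborel. exp (- s * t) * ig_potential \<delta> lam t) = 1 / phi_IG \<delta> lam s"
proof -
  have I1: "set_integrable lborel {0<..} (\<lambda>t. exp (- s * t))" "(LINT t:{0<..}|lborel. exp (- s * t)) = 1 / s"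
    by (rule set_integral_lborel_eq_has_integral_nonneg[OF exp_neg_has_integral_Ioi[OF s]]; simp)+
  note I2 = ig_kernel_laplace[OF lam less_imp_le[OF s]] and I3 = ig_kernel_primitive_laplace[OF lam s]
  have eq: "(\<lambda>t. exp (- s * t) * ig_potential \<delta> lam t) = (\<lambda>t. (lam * exp (- s * t)
      + 2 * (exp (- s * t) * ig_kernel lam t) + lam\<^sup>2 * (exp (- s * t) * ig_kernel_primitive lam t)) / (2 * \<delta>))"
    by (simp add: fun_eq_iff ig_potential_def field_simps)
  have int12: "set_integrable lborel {0<..} (\<lambda>t. lam * exp (- s * t) + 2 * (exp (- s * t) * ig_kernel lam t))"
    using I1 I2 by (intro set_integral_add(1)) auto
  have int3: "set_integrable lborel {0<..} (\<lambda>t. lam\<^sup>2 * (exp (- s * t) * ig_kernel_primitive lam t))"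
    using I3 by auto
  show "set_integrable lborel {0<..} (\<lambda>t. exp (- s * t) * ig_potential \<delta> lam t)"
    unfolding eq by (intro set_integrable_divide set_integral_add(1) int12 int3)
  have "(LINT t:{0<..}|lborel. exp (- s * t) * ig_potential \<delta> lam t)
      = (lam * (1 / s) + 2 * (1 / sqrt (2 * s + lam\<^sup>2)) + lam\<^sup>2 * (1 / (s * sqrt (2 * s + lam\<^sup>2)))) / (2 * \<delta>)"
    unfolding eq set_integral_divide_zero set_integral_add(2)[OF int12 int3]
    using I1 I2 I3 by simp
  then show "(LINT t:{0<..}|lborel. exp (- s * t) * ig_potential \<delta> lam t) = 1 / phi_IG \<delta> lam s"
    using inverse_phi_IG_eq[OF s lam \<delta>] by simp
qed

lemma potential_density_phi_IG_AE:
  fixes \<delta> lam :: real and u :: "real \<Rightarrow> real"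
  assumes \<delta>: "\<delta> > 0" and lam: "lam > 0" and u: "is_potential_density (phi_IG \<delta> lam) u"
  shows "AE t in lborel. t > 0 \<longrightarrow> u t = ig_potential \<delta> lam t"
proof (rule laplace_transform_unique_AE)
  show "u \<in> borel_measurable borel" "\<And>t. 0 < t \<Longrightarrow> 0 \<le> u t"
    "\<And>s. 0 < s \<Longrightarrow> set_integrable lborel {0<..} (\<lambda>t. exp (- s * t) * u t)"
    using u unfolding is_potential_density_def by auto
  show "\<And>s. 0 < s \<Longrightarrow> (LINT t:{0<..}|lborel. exp (- s * t) * u t)
      = (LINT t:{0<..}|lborel. exp (- s * t) * ig_potential \<delta> lam t)"
    using u ig_potential_laplace(2)[OF _ lam \<delta>] unfolding is_potential_density_def by auto
qed (use ig_potential_nonneg[OF \<delta> lam] ig_potential_laplace(1)[OF _ lam \<delta>] lam in auto)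

lemma ig_potential_le:
  fixes lam \<delta> :: real assumes lam: "lam > 0" and \<delta>: "\<delta> > 0" and t: "t \<ge> 0"
  shows "ig_potential \<delta> lam t \<le> lam / \<delta> + t powr (- 1 / 2) / (\<delta> * sqrt (2 * pi))"
proof -
  have "lam\<^sup>2 * ig_kernel_primitive lam t \<le> lam\<^sup>2 * (1 / lam)"
    by (intro mult_left_mono ig_kernel_primitive_le[OF lam]) auto
  also have "\<dots> = lam" using lam by (simp add: power2_eq_square)
  finally have "lam\<^sup>2 * ig_kernel_primitive lam t \<le> lam" .
  then have "ig_potential \<delta> lam t \<le> (lam + 2 * (t powr (- 1 / 2) / sqrt (2 * pi)) + lam) / (2 * \<delta>)"
    unfolding ig_potential_def using ig_kernel_le[OF t, of lam] \<delta>
    by (intro divide_right_mono add_mono) auto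
  also have "\<dots> = lam / \<delta> + t powr (- 1 / 2) / (\<delta> * sqrt (2 * pi))"
    using \<delta> by (simp add: field_simps)
  finally show ?thesis .
qed

lemma ig_potential_tendsto_at_top:
  fixes lam \<delta> :: real assumes lam: "lam > 0" and \<delta>: "\<delta> > 0"
  shows "(ig_potential \<delta> lam \<longlongrightarrow> lam / \<delta>) at_top"
proof -
  have bound: "\<forall>\<^sub>F t in at_top. ig_kernel lam t \<le> t powr (- 1 / 2) / sqrt (2 * pi)"
    using eventually_ge_at_top[of "0::real"] by eventually_elim (rule ig_kernel_le)
  have "((\<lambda>t::real. t powr (- 1 / 2) / sqrt (2 * pi)) \<longlongrightarrow> 0) at_top"
    by (intro tendsto_divide_zero tendsto_neg_powr filterlim_ident) auto
  then have "(ig_kernel lam \<longlongrightarrow> 0) at_top"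
    by (intro tendsto_sandwich[OF _ bound tendsto_const]) (simp add: ig_kernel_nonneg)
  then have "((\<lambda>t. (lam + 2 * ig_kernel lam t + lam\<^sup>2 * ig_kernel_primitive lam t) / (2 * \<delta>))
      \<longlongrightarrow> (lam + 2 * 0 + lam\<^sup>2 * (1 / lam)) / (2 * \<delta>)) at_top"
    by (intro tendsto_intros ig_kernel_primitive_tendsto[OF lam]) (use \<delta> in auto)
  moreover have "(lam + 2 * 0 + lam\<^sup>2 * (1 / lam)) / (2 * \<delta>) = lam / \<delta>"
    using lam \<delta> by (simp add: power2_eq_square field_simps)
  ultimately show ?thesis unfolding ig_potential_def[abs_def] by simp
qed

text \<open>Near \<open>0\<close> only the kernel term \<open>(2 * pi * t) powr (- 1 / 2)\<close> of the potential survives.\<close>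

lemma sqrt_mult_ig_potential_tendsto_0:
  fixes lam \<delta> :: real assumes lam: "lam > 0" and \<delta>: "\<delta> > 0"
  shows "((\<lambda>t. sqrt t * ig_potential \<delta> lam t) \<longlongrightarrow> 1 / (\<delta> * sqrt (2 * pi))) (at_right 0)"
proof -
  have sqrt_0: "(sqrt \<longlongrightarrow> 0) (at_right 0)"
    using tendsto_real_sqrt[OF tendsto_ident_at[of 0 "{0<..}"]] by simp
  have primitive_0: "((\<lambda>t. sqrt t * ig_kernel_primitive lam t) \<longlongrightarrow> 0) (at_right 0)"
  proof (rule tendsto_sandwich[where f = "\<lambda>_. 0" and h = "\<lambda>t. sqrt t * (1 / lam)"])
    show "\<forall>\<^sub>F t in at_right 0. 0 \<le> sqrt t * ig_kernel_primitive lam t"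
      using eventually_at_right_less[of 0] by eventually_elim (simp add: ig_kernel_primitive_nonneg)
    show "\<forall>\<^sub>F t in at_right 0. sqrt t * ig_kernel_primitive lam t \<le> sqrt t * (1 / lam)"
      using eventually_at_right_less[of 0]
      by eventually_elim (intro mult_left_mono ig_kernel_primitive_le[OF lam], simp)
    show "((\<lambda>t. sqrt t * (1 / lam)) \<longlongrightarrow> 0) (at_right 0)"
      using tendsto_mult[OF sqrt_0 tendsto_const[of "1 / lam"]] by simp
  qed simp
  have kernel_0: "((\<lambda>t. sqrt t * ig_kernel lam t) \<longlongrightarrow> 1 / sqrt (2 * pi)) (at_right 0)"
  proof (rule Lim_transform_eventually)
    have "((\<lambda>t. exp (- (lam\<^sup>2 / 2 * t)) / sqrt (2 * pi)) \<longlongrightarrow> exp (- (lam\<^sup>2 / 2 * 0)) / sqrt (2 * pi))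
        (at_right 0)"
      by (intro tendsto_intros) auto
    then show "((\<lambda>t. exp (- (lam\<^sup>2 / 2 * t)) / sqrt (2 * pi)) \<longlongrightarrow> 1 / sqrt (2 * pi)) (at_right 0)"
      by simp
    show "\<forall>\<^sub>F t in at_right 0. exp (- (lam\<^sup>2 / 2 * t)) / sqrt (2 * pi) = sqrt t * ig_kernel lam t"
      using eventually_at_right_less[of 0]
      by eventually_elim (simp add: ig_kernel_def sqrt_mult_powr_neg_half mult.assoc[symmetric])
  qed
  have "((\<lambda>t. (lam * sqrt t + 2 * (sqrt t * ig_kernel lam t) + lam\<^sup>2 * (sqrt t * ig_kernel_primitive lam t)) / (2 * \<delta>))
      \<longlongrightarrow> (lam * 0 + 2 * (1 / sqrt (2 * pi)) + lam\<^sup>2 * 0) / (2 * \<delta>)) (at_right 0)"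
    by (intro tendsto_intros sqrt_0 kernel_0 primitive_0) (use \<delta> in auto)
  moreover have "(lam * 0 + 2 * (1 / sqrt (2 * pi)) + lam\<^sup>2 * 0) / (2 * \<delta>) = 1 / (\<delta> * sqrt (2 * pi))"
    using \<delta> by simp
  moreover have "(lam * sqrt t + 2 * (sqrt t * ig_kernel lam t) + lam\<^sup>2 * (sqrt t * ig_kernel_primitive lam t)) / (2 * \<delta>)
      = sqrt t * ig_potential \<delta> lam t" for t
    unfolding ig_potential_def by (simp add: field_simps)
  ultimately show ?thesis by (simp add: mult.commute)
qed

section \<open>The Green function in radial form\<close>

definition heat_profile :: "real \<Rightarrow> real \<Rightarrow> real \<Rightarrow> real" where
  "heat_profile d r t = (4 * pi * t) powr (- d / 2) * exp (- r\<^sup>2 / (4 * t))"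

lemma heat_kernel_eq_heat_profile:
  "heat_kernel t x (y :: real ^ 'n) = heat_profile (real CARD('n)) (norm (x - y)) t"
  by (simp add: heat_kernel_def heat_profile_def)

lemma heat_profile_nonneg: "heat_profile d r t \<ge> 0"
  unfolding heat_profile_def by simp

lemma heat_profile_measurable [measurable]: "heat_profile d r \<in> borel_measurable borel"
  unfolding heat_profile_def[abs_def] by measurable

lemma heat_profile_scale:
  fixes r t d :: real assumes r: "r > 0" and t: "t > 0"
  shows "heat_profile d r (r\<^sup>2 * t) = r powr (- d) * heat_profile d 1 t"
proof -
  have "r\<^sup>2 = r powr 2" using r by simp
  then have "(r\<^sup>2) powr (- d / 2) = r powr (2 * (- d / 2))" by (simp only: powr_powr)
  then have "(r\<^sup>2) powr (- d / 2) = r powr (- d)" by simp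
  moreover have "(4 * pi * (r\<^sup>2 * t)) powr (- d / 2) = (r\<^sup>2) powr (- d / 2) * (4 * pi * t) powr (- d / 2)"
    using r t by (subst powr_mult[symmetric]) (auto simp: algebra_simps)
  ultimately have "(4 * pi * (r\<^sup>2 * t)) powr (- d / 2) = r powr (- d) * (4 * pi * t) powr (- d / 2)"
    by simp
  moreover have "- r\<^sup>2 / (4 * (r\<^sup>2 * t)) = - 1\<^sup>2 / (4 * t)"
    using r t by (simp add: field_simps power2_eq_square)
  ultimately show ?thesis unfolding heat_profile_def by simp
qed

lemma set_integral_heat_profile_scale:
  fixes r d :: real and w :: "real \<Rightarrow> real" assumes r: "r > 0"
  shows "(LINT t:{0<..}|lborel. heat_profile d r t * w t)
    = r powr (2 - d) * (LINT v:{0<..}|lborel. heat_profile d 1 v * w (r\<^sup>2 * v))"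
proof -
  have "(LINT t:{0<..}|lborel. heat_profile d r t * w t) = (\<integral>t. indicator {0<..} t * (heat_profile d r t * w t) \<partial>lborel)"
    by (simp add: set_lebesgue_integral_def)
  also have "\<dots> = \<bar>r\<^sup>2\<bar> *\<^sub>R (\<integral>v. indicator {0<..} (0 + r\<^sup>2 * v) * (heat_profile d r (0 + r\<^sup>2 * v) * w (0 + r\<^sup>2 * v)) \<partial>lborel)"
    by (rule lborel_integral_real_affine) (use r in auto)
  also have "(\<lambda>v. indicator {0<..} (0 + r\<^sup>2 * v) * (heat_profile d r (0 + r\<^sup>2 * v) * w (0 + r\<^sup>2 * v)))
      = (\<lambda>v. r powr (- d) * (indicator {0<..} v * (heat_profile d 1 v * w (r\<^sup>2 * v))))"
  proof
    fix v :: real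
    show "indicator {0<..} (0 + r\<^sup>2 * v) * (heat_profile d r (0 + r\<^sup>2 * v) * w (0 + r\<^sup>2 * v))
        = r powr (- d) * (indicator {0<..} v * (heat_profile d 1 v * w (r\<^sup>2 * v)))"
      using r by (cases "v > 0") (auto simp: heat_profile_scale indicator_def zero_less_mult_iff)
  qed
  also have "\<bar>r\<^sup>2\<bar> *\<^sub>R (\<integral>v. r powr (- d) * (indicator {0<..} v * (heat_profile d 1 v * w (r\<^sup>2 * v))) \<partial>lborel)
      = r\<^sup>2 * r powr (- d) * (LINT v:{0<..}|lborel. heat_profile d 1 v * w (r\<^sup>2 * v))"
    by (simp add: set_lebesgue_integral_def)
  also have "r\<^sup>2 * r powr (- d) = r powr (2 - d)"
  proof -
    have "r\<^sup>2 = r powr 2" using r by simp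
    then show ?thesis using r by (simp add: powr_diff powr_minus divide_inverse)
  qed
  finally show ?thesis .
qed

lemma heat_profile_moment:
  fixes d a :: real assumes da: "d / 2 + a > 1"
  shows "set_integrable lborel {0<..} (\<lambda>v. heat_profile d 1 v * v powr (- a))"
    "(LINT v:{0<..}|lborel. heat_profile d 1 v * v powr (- a)) = pi powr (- d / 2) * 4 powr (a - 1) * Gamma (d / 2 + a - 1)"
proof -
  have const: "(4 * pi) powr (- d / 2) * ((1 / 4) powr (1 - (d / 2 + a)) * Gamma (d / 2 + a - 1))
      = pi powr (- d / 2) * 4 powr (a - 1) * Gamma (d / 2 + a - 1)"
  proof -
    have "(4::real) powr (- d / 2) * (1 / 4) powr b = 4 powr (- d / 2 - b)" for b
      by (simp add: powr_divide powr_diff)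
    then have "(4::real) powr (- d / 2) * (1 / 4) powr (1 - (d / 2 + a)) = 4 powr (- d / 2 - (1 - (d / 2 + a)))" .
    also have "- d / 2 - (1 - (d / 2 + a)) = a - 1" by simp
    finally show ?thesis by (simp add: powr_mult mult_ac)
  qed
  have "((\<lambda>v. (4 * pi) powr (- d / 2) * (v powr (- (d / 2 + a)) * exp (- ((1 / 4) / v)))) has_integral
      (4 * pi) powr (- d / 2) * ((1 / 4) powr (1 - (d / 2 + a)) * Gamma (d / 2 + a - 1))) {0<..}"
    by (intro has_integral_mult_right inverse_Gamma_has_integral_Ioi) (use da in auto)
  then have H: "((\<lambda>v. (4 * pi) powr (- d / 2) * (v powr (- (d / 2 + a)) * exp (- ((1 / 4) / v)))) has_integral
      pi powr (- d / 2) * 4 powr (a - 1) * Gamma (d / 2 + a - 1)) {0<..}"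
    by (simp only: const)
  have pointwise: "(4 * pi) powr (- d / 2) * (v powr (- (d / 2 + a)) * exp (- ((1 / 4) / v)))
      = heat_profile d 1 v * v powr (- a)" if "v \<in> {0<..}" for v
  proof -
    have "v powr (- (d / 2)) * v powr (- a) = v powr (- (d / 2 + a))"
      using that by (simp add: powr_add[symmetric])
    moreover have "heat_profile d 1 v = (4 * pi) powr (- d / 2) * (v powr (- (d / 2)) * exp (- ((1 / 4) / v)))"
      using that by (simp add: heat_profile_def powr_mult)
    ultimately show ?thesis by (simp add: mult_ac)
  qed
  have "((\<lambda>v. heat_profile d 1 v * v powr (- a)) has_integral
      pi powr (- d / 2) * 4 powr (a - 1) * Gamma (d / 2 + a - 1)) {0<..}"
    by (rule has_integral_eq[OF pointwise H])
  from set_integral_lborel_eq_has_integral_nonneg[OF this]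
  show "set_integrable lborel {0<..} (\<lambda>v. heat_profile d 1 v * v powr (- a))"
    "(LINT v:{0<..}|lborel. heat_profile d 1 v * v powr (- a)) = pi powr (- d / 2) * 4 powr (a - 1) * Gamma (d / 2 + a - 1)"
    by (auto simp: heat_profile_nonneg)
qed

lemma heat_profile_integral:
  fixes d :: real assumes "d > 2"
  shows "set_integrable lborel {0<..} (heat_profile d 1)"
    "(LINT v:{0<..}|lborel. heat_profile d 1 v) = pi powr (- d / 2) / 4 * Gamma (d / 2 - 1)"
proof -
  have "d / 2 + 0 > 1" using assms by simp
  note moment = heat_profile_moment[OF this]
  have eq: "heat_profile d 1 v * v powr (- 0) = heat_profile d 1 v" if "v \<in> {0<..}" for v
    using that by simp
  have "set_integrable lborel {0<..} (\<lambda>v. heat_profile d 1 v * v powr (- 0))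
      = set_integrable lborel {0<..} (heat_profile d 1)"
    by (rule set_integrable_cong) (use eq in auto)
  then show "set_integrable lborel {0<..} (heat_profile d 1)"
    using moment(1) by (rule iffD1)
  have "(LINT v:{0<..}|lborel. heat_profile d 1 v) = (LINT v:{0<..}|lborel. heat_profile d 1 v * v powr (- 0))"
    by (rule set_lebesgue_integral_cong[symmetric]) (use eq in auto)
  also have "\<dots> = pi powr (- d / 2) * 4 powr (0 - 1) * Gamma (d / 2 + 0 - 1)"
    by (rule moment(2))
  also have "\<dots> = pi powr (- d / 2) / 4 * Gamma (d / 2 - 1)"
    by (simp add: powr_minus)
  finally show "(LINT v:{0<..}|lborel. heat_profile d 1 v) = pi powr (- d / 2) / 4 * Gamma (d / 2 - 1)" .
qed

lemma heat_profile_integral_tendsto: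
  fixes d A B :: real and w :: "real \<Rightarrow> real \<Rightarrow> real" and g :: "real \<Rightarrow> real"
  assumes d: "d > 2"
    and [measurable]: "\<And>T. w T \<in> borel_measurable borel" "g \<in> borel_measurable borel"
    and lim: "\<And>v. v > 0 \<Longrightarrow> ((\<lambda>T. w T v) \<longlongrightarrow> g v) at_top"
    and bound: "\<forall>\<^sub>F T in at_top. \<forall>v>0. \<bar>w T v\<bar> \<le> A + B * v powr (- 1 / 2)"
  shows "((\<lambda>T. LINT v:{0<..}|lborel. heat_profile d 1 v * w T v)
    \<longlongrightarrow> (LINT v:{0<..}|lborel. heat_profile d 1 v * g v)) at_top"
proof -
  define W where "W v = indicator {0<..} v * (heat_profile d 1 v * (A + B * v powr (- 1 / 2)))" for v
  have "1 < d / 2 + 1 / 2" using d by simp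
  from heat_profile_moment(1)[OF this] heat_profile_integral(1)[OF d]
  have "set_integrable lborel {0<..} (\<lambda>v. A * heat_profile d 1 v + B * (heat_profile d 1 v * v powr (- (1 / 2))))"
    by (intro set_integral_add(1) set_integrable_mult_right) auto
  then have "integrable lborel W"
    unfolding set_integrable_def W_def by (simp add: algebra_simps)
  then have "((\<lambda>T. \<integral>v. indicator {0<..} v * (heat_profile d 1 v * w T v) \<partial>lborel)
      \<longlongrightarrow> (\<integral>v. indicator {0<..} v * (heat_profile d 1 v * g v) \<partial>lborel)) at_top"
  proof (rule integral_dominated_convergence_at_top[where w = W, rotated 2])
    show "AE v in lborel. ((\<lambda>T. indicator {0<..} v * (heat_profile d 1 v * w T v))
        \<longlongrightarrow> indicator {0<..} v * (heat_profile d 1 v * g v)) at_top"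
    proof (intro AE_I2)
      fix v :: real
      show "((\<lambda>T. indicator {0<..} v * (heat_profile d 1 v * w T v))
          \<longlongrightarrow> indicator {0<..} v * (heat_profile d 1 v * g v)) at_top"
        using lim[of v] by (cases "v > 0") (simp_all add: tendsto_mult_left)
    qed
    show "\<forall>\<^sub>F T in at_top. AE v in lborel. norm (indicator {0<..} v * (heat_profile d 1 v * w T v)) \<le> W v"
      using bound
    proof (eventually_elim, intro AE_I2)
      fix T v :: real
      assume bound_T: "\<forall>v>0. \<bar>w T v\<bar> \<le> A + B * v powr (- 1 / 2)"
      show "norm (indicator {0<..} v * (heat_profile d 1 v * w T v)) \<le> W v"
      proof (cases "v > 0")
        case True
        then have "heat_profile d 1 v * \<bar>w T v\<bar> \<le> heat_profile d 1 v * (A + B * v powr (- 1 / 2))"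
          using bound_T heat_profile_nonneg by (intro mult_left_mono) auto
        then show ?thesis
          using True by (simp add: W_def abs_mult heat_profile_nonneg)
      qed (simp add: W_def)
    qed
  qed auto
  then show ?thesis by (simp add: set_lebesgue_integral_def)
qed

lemma ig_potential_scaled_integral_tendsto_at_top:
  fixes d lam \<delta> :: real assumes d: "d > 2" and lam: "lam > 0" and \<delta>: "\<delta> > 0"
  shows "((\<lambda>r. LINT v:{0<..}|lborel. heat_profile d 1 v * ig_potential \<delta> lam (r\<^sup>2 * v))
    \<longlongrightarrow> (LINT v:{0<..}|lborel. heat_profile d 1 v * (lam / \<delta>))) at_top"
proof (rule heat_profile_integral_tendsto[OF d, where A = "lam / \<delta>" and B = "1 / (\<delta> * sqrt (2 * pi))"])
  show "((\<lambda>r. ig_potential \<delta> lam (r\<^sup>2 * v)) \<longlongrightarrow> lam / \<delta>) at_top" if "v > 0" for v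
  proof (rule filterlim_compose[OF ig_potential_tendsto_at_top[OF lam \<delta>]])
    have "filterlim (\<lambda>r::real. v * r\<^sup>2) at_top at_top"
      by (rule filterlim_tendsto_pos_mult_at_top[OF tendsto_const that])
         (intro filterlim_pow_at_top filterlim_ident, auto)
    then show "filterlim (\<lambda>r. r\<^sup>2 * v) at_top at_top"
      by (simp add: mult.commute)
  qed
  show "\<forall>\<^sub>F r in at_top. \<forall>v>0. \<bar>ig_potential \<delta> lam (r\<^sup>2 * v)\<bar> \<le> lam / \<delta> + 1 / (\<delta> * sqrt (2 * pi)) * v powr (- 1 / 2)"
    using eventually_ge_at_top[of "1::real"]
  proof (eventually_elim, intro allI impI)
    fix r v :: real assume r: "r \<ge> 1" and v: "v > 0"
    have "ig_potential \<delta> lam (r\<^sup>2 * v) \<le> lam / \<delta> + (r\<^sup>2 * v) powr (- 1 / 2) / (\<delta> * sqrt (2 * pi))"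
      using v by (intro ig_potential_le[OF lam \<delta>]) simp
    also have "(r\<^sup>2 * v) powr (- 1 / 2) = v powr (- 1 / 2) / r"
      using r v by (intro powr_neg_half_scale) auto
    also have "v powr (- 1 / 2) / r \<le> v powr (- 1 / 2)"
      using r by (intro divide_left_mono[where b = 1, simplified]) auto
    finally show "\<bar>ig_potential \<delta> lam (r\<^sup>2 * v)\<bar> \<le> lam / \<delta> + 1 / (\<delta> * sqrt (2 * pi)) * v powr (- 1 / 2)"
      using ig_potential_nonneg[OF \<delta> lam] \<delta> by (simp add: divide_right_mono)
  qed
qed (use ig_potential_measurable[OF lam] in auto)

lemma ig_potential_scaled_integral_tendsto_0:
  fixes d lam \<delta> :: real assumes d: "d > 2" and lam: "lam > 0" and \<delta>: "\<delta> > 0"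
  shows "((\<lambda>r. LINT v:{0<..}|lborel. heat_profile d 1 v * (r * ig_potential \<delta> lam (r\<^sup>2 * v)))
    \<longlongrightarrow> (LINT v:{0<..}|lborel. heat_profile d 1 v * (1 / (\<delta> * sqrt (2 * pi)) * v powr (- 1 / 2)))) (at_right 0)"
  unfolding filterlim_at_right_to_top
proof (rule heat_profile_integral_tendsto[OF d, where A = "lam / \<delta>" and B = "1 / (\<delta> * sqrt (2 * pi))"])
  show "((\<lambda>T. inverse T * ig_potential \<delta> lam ((inverse T)\<^sup>2 * v))
      \<longlongrightarrow> 1 / (\<delta> * sqrt (2 * pi)) * v powr (- 1 / 2)) at_top" if v: "v > 0" for v
  proof (rule Lim_transform_eventually)
    have "((\<lambda>T::real. (inverse T)\<^sup>2 * v) \<longlongrightarrow> 0\<^sup>2 * v) at_top"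
      by (intro tendsto_intros tendsto_inverse_0_at_top filterlim_ident)
    moreover have "\<forall>\<^sub>F T in at_top. (inverse T)\<^sup>2 * v \<in> {0<..} \<and> (inverse T)\<^sup>2 * v \<noteq> 0"
      using eventually_gt_at_top[of "0::real"] by eventually_elim (use v in auto)
    ultimately have "filterlim (\<lambda>T::real. (inverse T)\<^sup>2 * v) (at_right 0) at_top"
      unfolding filterlim_at by simp
    from filterlim_compose[OF sqrt_mult_ig_potential_tendsto_0[OF lam \<delta>] this]
    show "((\<lambda>T. v powr (- 1 / 2) * (sqrt ((inverse T)\<^sup>2 * v) * ig_potential \<delta> lam ((inverse T)\<^sup>2 * v)))
        \<longlongrightarrow> 1 / (\<delta> * sqrt (2 * pi)) * v powr (- 1 / 2)) at_top"
      by (subst mult.commute[of "1 / _"]) (rule tendsto_mult_left)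
    show "\<forall>\<^sub>F T in at_top. v powr (- 1 / 2) * (sqrt ((inverse T)\<^sup>2 * v) * ig_potential \<delta> lam ((inverse T)\<^sup>2 * v))
        = inverse T * ig_potential \<delta> lam ((inverse T)\<^sup>2 * v)"
      using eventually_gt_at_top[of "0::real"]
      by eventually_elim (use sqrt_mult_powr_neg_half[OF v] v in \<open>simp add: real_sqrt_mult mult_ac\<close>)
  qed
  show "\<forall>\<^sub>F T in at_top. \<forall>v>0. \<bar>inverse T * ig_potential \<delta> lam ((inverse T)\<^sup>2 * v)\<bar>
      \<le> lam / \<delta> + 1 / (\<delta> * sqrt (2 * pi)) * v powr (- 1 / 2)"
    using eventually_ge_at_top[of "1::real"]
  proof (eventually_elim, intro allI impI)
    fix T v :: real assume T: "T \<ge> 1" and v: "v > 0"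
    define r where "r = inverse T"
    have r: "r > 0" "r \<le> 1" using T by (auto simp: r_def field_simps)
    have "r * ig_potential \<delta> lam (r\<^sup>2 * v) \<le> r * (lam / \<delta> + (r\<^sup>2 * v) powr (- 1 / 2) / (\<delta> * sqrt (2 * pi)))"
      using r v by (intro mult_left_mono ig_potential_le[OF lam \<delta>]) auto
    also have "\<dots> = r * (lam / \<delta>) + 1 / (\<delta> * sqrt (2 * pi)) * v powr (- 1 / 2)"
      unfolding powr_neg_half_scale[OF r(1) v] using r \<delta> by (simp add: field_simps)
    also have "r * (lam / \<delta>) \<le> lam / \<delta>"
      using r lam \<delta> by (intro mult_left_le_one_le) auto
    finally show "\<bar>inverse T * ig_potential \<delta> lam ((inverse T)\<^sup>2 * v)\<bar>
        \<le> lam / \<delta> + 1 / (\<delta> * sqrt (2 * pi)) * v powr (- 1 / 2)"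
      using r ig_potential_nonneg[OF \<delta> lam] by (simp add: r_def[symmetric])
  qed
qed (use ig_potential_measurable[OF lam] in auto)

definition ig_green_radial :: "real \<Rightarrow> real \<Rightarrow> real \<Rightarrow> real \<Rightarrow> real" where
  "ig_green_radial d \<delta> lam r = (LINT t:{0<..}|lborel. heat_profile d r t * ig_potential \<delta> lam t)"

lemma green_fun_eq_ig_green_radial:
  fixes \<delta> lam :: real and u :: "real \<Rightarrow> real" and x :: "real ^ 'n"
  assumes \<delta>: "\<delta> > 0" and lam: "lam > 0" and u: "is_potential_density (phi_IG \<delta> lam) u"
  shows "green_fun u x = ig_green_radial (real CARD('n)) \<delta> lam (norm x)"
  unfolding green_fun_def ig_green_radial_def heat_kernel_eq_heat_profile diff_0
proof (rule set_lebesgue_integral_cong_AE)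
  show "AE t\<in>{0<..} in lborel. heat_profile (real CARD('n)) (norm (- x)) t * u t
      = heat_profile (real CARD('n)) (norm x) t * ig_potential \<delta> lam t"
    using potential_density_phi_IG_AE[OF \<delta> lam u] by eventually_elim auto
qed (use u ig_potential_measurable[OF lam] in \<open>auto simp: is_potential_density_def\<close>)

lemma green_constant_at_0:
  fixes d \<delta> :: real assumes "\<delta> > 0"
  shows "1 / (\<delta> * sqrt (2 * pi)) * (pi powr (- d / 2) * 4 powr (1 / 2 - 1) * Gamma (d / 2 + 1 / 2 - 1))
    = 1 / (2 powr (3/2) * pi powr (d / 2) * \<delta>) * (Gamma ((d - 1) / 2) / Gamma (1/2))"
proof -
  have pi_powr: "pi powr (- d / 2) = 1 / pi powr (d / 2)"
    using powr_minus_divide[of pi "d / 2"] by simp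
  have "(4::real) powr (1 / 2 - 1) = 4 powr (- (1 / 2))" by simp
  also have "\<dots> = 1 / 4 powr (1 / 2)" by (rule powr_minus_divide)
  also have "(4::real) powr (1 / 2) = sqrt 4" by (rule powr_half_sqrt) simp
  finally have four_powr: "(4::real) powr (1 / 2 - 1) = 1 / 2" by simp
  have "(2::real) powr (3 / 2) = 2 powr (1 + 1 / 2)" by simp
  also have "\<dots> = 2 * sqrt 2" by (subst powr_add) (simp add: powr_half_sqrt)
  finally have two_powr: "(2::real) powr (3 / 2) = 2 * sqrt 2" .
  have exponent: "d / 2 + 1 / 2 - 1 = (d - 1) / 2" by simp
  show ?thesis
    unfolding pi_powr four_powr two_powr exponent Gamma_one_half_real real_sqrt_mult
    using assms by (simp add: field_simps)
qed

lemma green_constant_at_infinity: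
  fixes d \<delta> lam :: real assumes "\<delta> > 0"
  shows "lam / \<delta> * (pi powr (- d / 2) / 4 * Gamma (d / 2 - 1)) = lam / (4 * pi powr (d / 2) * \<delta>) * Gamma ((d - 2) / 2)"
proof -
  have pi_powr: "pi powr (- d / 2) = 1 / pi powr (d / 2)"
    using powr_minus_divide[of pi "d / 2"] by simp
  have exponent: "d / 2 - 1 = (d - 2) / 2" by simp
  show ?thesis
    unfolding pi_powr exponent using assms by (simp add: field_simps)
qed

lemma ig_green_radial_tendsto_0:
  fixes d lam \<delta> :: real assumes d: "d > 2" and lam: "lam > 0" and \<delta>: "\<delta> > 0"
  shows "((\<lambda>r. ig_green_radial d \<delta> lam r / r powr (1 - d))
    \<longlongrightarrow> 1 / (2 powr (3/2) * pi powr (d / 2) * \<delta>) * (Gamma ((d - 1) / 2) / Gamma (1/2))) (at_right 0)"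
proof (rule Lim_transform_eventually)
  have "1 < d / 2 + 1 / 2" using d by simp
  note moment = heat_profile_moment[OF this]
  have "(LINT v:{0<..}|lborel. heat_profile d 1 v * (1 / (\<delta> * sqrt (2 * pi)) * v powr (- 1 / 2)))
      = 1 / (\<delta> * sqrt (2 * pi)) * (pi powr (- d / 2) * 4 powr (1 / 2 - 1) * Gamma (d / 2 + 1 / 2 - 1))"
    using moment(2) by (simp add: mult.left_commute)
  also have "\<dots> = 1 / (2 powr (3/2) * pi powr (d / 2) * \<delta>) * (Gamma ((d - 1) / 2) / Gamma (1/2))"
    by (rule green_constant_at_0[OF \<delta>])
  finally show "((\<lambda>r. LINT v:{0<..}|lborel. heat_profile d 1 v * (r * ig_potential \<delta> lam (r\<^sup>2 * v)))
      \<longlongrightarrow> 1 / (2 powr (3/2) * pi powr (d / 2) * \<delta>) * (Gamma ((d - 1) / 2) / Gamma (1/2))) (at_right 0)"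
    using ig_potential_scaled_integral_tendsto_0[OF d lam \<delta>] by simp
  show "\<forall>\<^sub>F r in at_right 0. (LINT v:{0<..}|lborel. heat_profile d 1 v * (r * ig_potential \<delta> lam (r\<^sup>2 * v)))
      = ig_green_radial d \<delta> lam r / r powr (1 - d)"
    using eventually_at_right_less[of 0]
  proof eventually_elim
    case (elim r)
    have "ig_green_radial d \<delta> lam r / r powr (1 - d)
        = r powr (2 - d) / r powr (1 - d) * (LINT v:{0<..}|lborel. heat_profile d 1 v * ig_potential \<delta> lam (r\<^sup>2 * v))"
      unfolding ig_green_radial_def set_integral_heat_profile_scale[OF elim] by simp
    also have "r powr (2 - d) / r powr (1 - d) = r"
      using elim by (simp add: powr_diff[symmetric])
    finally show ?case by (simp add: mult.left_commute)
  qed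
qed

lemma ig_green_radial_tendsto_at_top:
  fixes d lam \<delta> :: real assumes d: "d > 2" and lam: "lam > 0" and \<delta>: "\<delta> > 0"
  shows "((\<lambda>r. ig_green_radial d \<delta> lam r / r powr (2 - d))
    \<longlongrightarrow> lam / (4 * pi powr (d / 2) * \<delta>) * Gamma ((d - 2) / 2)) at_top"
proof (rule Lim_transform_eventually)
  have "(LINT v:{0<..}|lborel. heat_profile d 1 v * (lam / \<delta>))
      = lam / (4 * pi powr (d / 2) * \<delta>) * Gamma ((d - 2) / 2)"
  proof -
    have "(LINT v:{0<..}|lborel. heat_profile d 1 v * (lam / \<delta>))
        = lam / \<delta> * (LINT v:{0<..}|lborel. heat_profile d 1 v)"
      unfolding set_integral_mult_left by (rule mult.commute)
    then show ?thesis
      unfolding heat_profile_integral(2)[OF d] green_constant_at_infinity[OF \<delta>] .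
  qed
  then show "((\<lambda>r. LINT v:{0<..}|lborel. heat_profile d 1 v * ig_potential \<delta> lam (r\<^sup>2 * v))
      \<longlongrightarrow> lam / (4 * pi powr (d / 2) * \<delta>) * Gamma ((d - 2) / 2)) at_top"
    using ig_potential_scaled_integral_tendsto_at_top[OF d lam \<delta>] by simp
  show "\<forall>\<^sub>F r in at_top. (LINT v:{0<..}|lborel. heat_profile d 1 v * ig_potential \<delta> lam (r\<^sup>2 * v))
      = ig_green_radial d \<delta> lam r / r powr (2 - d)"
    using eventually_gt_at_top[of "0::real"]
  proof eventually_elim
    case (elim r)
    then show ?case
      unfolding ig_green_radial_def set_integral_heat_profile_scale[OF elim] by simp
  qed
qed

theorem mainTheorem7:
  fixes \<delta> lam :: real and u :: "real \<Rightarrow> real"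
  assumes "CARD('n) \<ge> 3"
    and "\<delta> > 0" and "lam > 0"
    and "is_potential_density (phi_IG \<delta> lam) u"
  shows "(\<lambda>x::real^'n. green_fun u x) \<sim>[at 0]
           (\<lambda>x. 1 / (2 powr (3/2) * pi powr (real CARD('n) / 2) * \<delta>)
                 * (Gamma ((real CARD('n) - 1) / 2) / Gamma (1/2))
                 * norm x powr (1 - real CARD('n))) \<and>
         (\<lambda>x::real^'n. green_fun u x) \<sim>[at_infinity]
           (\<lambda>x. lam / (4 * pi powr (real CARD('n) / 2) * \<delta>)
                 * Gamma ((real CARD('n) - 2) / 2)
                 * norm x powr (2 - real CARD('n)))"
proof -
  define d where "d = real CARD('n)"
  have d: "d > 2" using assms(1) by (simp add: d_def)
  have green: "green_fun u x = ig_green_radial d \<delta> lam (norm x)" for x :: "real ^ 'n"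
    unfolding d_def by (rule green_fun_eq_ig_green_radial[OF assms(2-4)])
  have "1 / (2 powr (3/2) * pi powr (d / 2) * \<delta>) * (Gamma ((d - 1) / 2) / Gamma (1/2)) \<noteq> 0"
       "lam / (4 * pi powr (d / 2) * \<delta>) * Gamma ((d - 2) / 2) \<noteq> 0"
    using d assms(2,3) by (auto simp: Gamma_real_pos[THEN less_imp_neq, symmetric])
  with ig_green_radial_tendsto_0[OF d assms(3,2)] ig_green_radial_tendsto_at_top[OF d assms(3,2)]
  show ?thesis
    unfolding green d_def[symmetric]
    by (blast intro: asymp_equiv_at_0_radial asymp_equiv_at_infinity_radial)
qed

end
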